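(* Let $d\ge4$ and $1\le p<d/2$ be integers. Every critical point of $\varphi_0$ in the interior of $K_0$ lies on the curve $\tilde{\mathbf{z}}:(0,\infty)\to K_0$, $x\mapsto(\tilde z_{j01}(x),\tilde z_{j10}(x))_{j\in[p]}$, where $$\tilde z_{j01}(x)=\tilde z_{j10}(x)=\frac{\tau_jx^j}{2\theta(x)}.$$ Moreover, for $x>0$, the point $\tilde{\mathbf{z}}(x)$ is a critical point of $\varphi_0$ if and only if $x$ is a root of the polynomial $$g(x)=2\bigl(p\theta(x)-\theta_1(x)\bigr)(1+x)-d\,\theta(x).$$
   Context: Let $\tau_j=\binom{d}{p}\binom{p}{j}\binom{d-p}{p-j}$ for $0\le j\le p$, $\theta(t)=\sum_{j=0}^p\tau_jt^j$ and $\theta_1(t)=\sum_{j=1}^pj\tau_jt^j$. Let $K_0\subset\mathbb{R}^{2p}$ be the set of points $(z_{j01},z_{j10})_{j\in[p]}$ with all $z_{j01},z_{j10}\ge0$ and $\sum_{j\in[p]}z_{j01}\le\frac12$, $\sum_{j\in[p]}z_{j10}\le\frac12$; set $z_{001}=\frac12-\sum_{j\in[p]}z_{j01}$ and $z_{010}=\frac12-\sum_{j\in[p]}z_{j10}$. Define $A_0=p-\sum_{j\in[p]}j(z_{j01}+z_{j10})$, $B_0=\frac d2-A_0$, and $$\varphi_0=A_0\log A_0+B_0\log B_0+\sum_{j=0}^p\sum_{(\alpha,\beta)\in\{(0,1),(1,0)\}}\bigl(z_{j\alpha\beta}\log\tau_j-z_{j\alpha\beta}\log z_{j\alpha\beta}\bigr).$$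 (This is the restriction of the function $\varphi$ to the face $z=0$, where all $z_{j00}=z_{j11}=0$.) A critical point is a point of the interior of $K_0$ where the gradient of $\varphi_0$ vanishes. *)

theory Defs
  imports "HOL-Analysis.Analysis"
begin

text \<open>Points of K_0 subset R^{2p} are pairs (u, v) of functions nat => real, where
  u j = z_{j01} and v j = z_{j10} for j in [p] = {1..p}; values outside {1..p} are irrelevant.\<close>

definition tau :: "nat \<Rightarrow> nat \<Rightarrow> nat \<Rightarrow> real" where
  "tau d p j = real ((d choose p) * (p choose j) * ((d - p) choose (p - j)))"

definition theta :: "nat \<Rightarrow> nat \<Rightarrow> real \<Rightarrow> real" where
  "theta d p t = (\<Sum>j = 0..p. tau d p j * t ^ j)"

definition theta1 :: "nat \<Rightarrow> nat \<Rightarrow> real \<Rightarrow> real" where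
  "theta1 d p t = (\<Sum>j = 1..p. real j * tau d p j * t ^ j)"

definition phi0 :: "nat \<Rightarrow> nat \<Rightarrow> (nat \<Rightarrow> real) \<Rightarrow> (nat \<Rightarrow> real) \<Rightarrow> real" where
  "phi0 d p u v =
    (let z01 = (\<lambda>j. if j = 0 then 1/2 - (\<Sum>i = 1..p. u i) else u j);
         z10 = (\<lambda>j. if j = 0 then 1/2 - (\<Sum>i = 1..p. v i) else v j);
         A = real p - (\<Sum>j = 1..p. real j * (u j + v j));
         B = real d / 2 - A
     in A * ln A + B * ln B
        + (\<Sum>j = 0..p. (z01 j * ln (tau d p j) - z01 j * ln (z01 j))
                      + (z10 j * ln (tau d p j) - z10 j * ln (z10 j))))"

definition interior_K0 :: "nat \<Rightarrow> (nat \<Rightarrow> real) \<Rightarrow> (nat \<Rightarrow> real) \<Rightarrow> bool" where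
  "interior_K0 p u v \<longleftrightarrow>
     (\<forall>j\<in>{1..p}. u j > 0 \<and> v j > 0) \<and> (\<Sum>j = 1..p. u j) < 1/2 \<and> (\<Sum>j = 1..p. v j) < 1/2"

definition critical0 :: "nat \<Rightarrow> nat \<Rightarrow> (nat \<Rightarrow> real) \<Rightarrow> (nat \<Rightarrow> real) \<Rightarrow> bool" where
  "critical0 d p u v \<longleftrightarrow> interior_K0 p u v \<and>
     (\<forall>j\<in>{1..p}.
        ((\<lambda>t. phi0 d p (u(j := t)) v) has_real_derivative 0) (at (u j)) \<and>
        ((\<lambda>t. phi0 d p u (v(j := t))) has_real_derivative 0) (at (v j)))"

definition ztilde :: "nat \<Rightarrow> nat \<Rightarrow> real \<Rightarrow> nat \<Rightarrow> real" where
  "ztilde d p x j = tau d p j * x ^ j / (2 * theta d p x)"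

definition gpoly :: "nat \<Rightarrow> nat \<Rightarrow> real \<Rightarrow> real" where
  "gpoly d p x = 2 * (real p * theta d p x - theta1 d p x) * (1 + x) - real d * theta d p x"

end

theory Submission
  imports Defs
begin

text \<open>The partial derivative of \<open>\<phi>\<^sub>0\<close> in \<open>z\<^sub>j\<^sub>0\<^sub>1\<close> is
  \<open>j log (B\<^sub>0/A\<^sub>0) + log \<tau>\<^sub>j - log z\<^sub>j\<^sub>0\<^sub>1 - log \<tau>\<^sub>0 + log z\<^sub>0\<^sub>0\<^sub>1\<close>.
  Hence at a critical point \<open>z\<^sub>j\<^sub>0\<^sub>1 / \<tau>\<^sub>j = x\<^sup>j z\<^sub>0\<^sub>0\<^sub>1 / \<tau>\<^sub>0\<close> with \<open>x = B\<^sub>0/A\<^sub>0\<close>, and likewise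
  for \<open>z\<^sub>j\<^sub>1\<^sub>0\<close> with the same \<open>x\<close>; the constraint \<open>\<Sum>\<^sub>j z\<^sub>j\<^sub>0\<^sub>1 = 1/2\<close> then forces
  \<open>z\<^sub>0\<^sub>0\<^sub>1 = \<tau>\<^sub>0 / (2 \<theta>(x))\<close>, i.e. the point is \<open>z\<^sup>~(x)\<close>. Conversely \<open>z\<^sup>~(x)\<close> is critical iff
  its own ratio \<open>B\<^sub>0/A\<^sub>0\<close> equals \<open>x\<close>; as \<open>A\<^sub>0 = p - \<theta>\<^sub>1(x)/\<theta>(x)\<close> there, clearing
  denominators turns \<open>B\<^sub>0 = x A\<^sub>0\<close> into \<open>g(x) = 0\<close>.\<close>

lemma sum_update_on_subset:
  fixes f g :: "'a \<Rightarrow> 'b::ab_group_add"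
  assumes "finite A" "B \<subseteq> A" "\<And>i. i \<in> A - B \<Longrightarrow> f i = g i"
  shows "sum f A = sum g A - sum g B + sum f B"
proof -
  have "sum f (A - B) = sum g (A - B)" using assms(3) by (rule sum.cong[OF refl])
  then show ?thesis using sum_diff[OF assms(1,2), of f] sum_diff[OF assms(1,2), of g] by (simp add: diff_eq_eq)
qed

lemma tau_pos: "2 * p < d \<Longrightarrow> j \<le> p \<Longrightarrow> 0 < tau d p j"
  unfolding tau_def by simp

lemma theta_eq: "theta d p x = tau d p 0 + (\<Sum>j = 1..p. tau d p j * x ^ j)"
  unfolding theta_def by (simp add: sum.atLeast_Suc_atMost)

lemma theta_pos:
  assumes "2 * p < d" "0 < x"
  shows "0 < theta d p x"
proof -
  have "0 \<le> (\<Sum>j = 1..p. tau d p j * x ^ j)"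
    using assms tau_pos by (intro sum_nonneg) (simp add: less_imp_le)
  then show ?thesis using tau_pos[OF assms(1), of 0] by (simp add: theta_eq)
qed

text \<open>\<open>z0 p u\<close> and \<open>z0 p v\<close> are the paper's \<open>z\<^sub>0\<^sub>0\<^sub>1\<close> and \<open>z\<^sub>0\<^sub>1\<^sub>0\<close>;
  \<open>coord p u j\<close> is \<open>z\<^sub>j\<^sub>0\<^sub>1\<close> for \<open>0 \<le> j \<le> p\<close>.\<close>

definition A0 :: "nat \<Rightarrow> (nat \<Rightarrow> real) \<Rightarrow> (nat \<Rightarrow> real) \<Rightarrow> real" where
  "A0 p u v = real p - (\<Sum>j = 1..p. real j * (u j + v j))"

definition z0 :: "nat \<Rightarrow> (nat \<Rightarrow> real) \<Rightarrow> real" where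
  "z0 p u = 1/2 - (\<Sum>j = 1..p. u j)"

definition coord :: "nat \<Rightarrow> (nat \<Rightarrow> real) \<Rightarrow> nat \<Rightarrow> real" where
  "coord p u j = (if j = 0 then z0 p u else u j)"

definition ent :: "real \<Rightarrow> real \<Rightarrow> real" where
  "ent c z = z * ln c - z * ln z"

lemma phi0_eq:
  "phi0 d p u v = A0 p u v * ln (A0 p u v) + (real d / 2 - A0 p u v) * ln (real d / 2 - A0 p u v)
     + (\<Sum>j = 0..p. ent (tau d p j) (coord p u j) + ent (tau d p j) (coord p v j))"
  unfolding phi0_def Let_def A0_def z0_def coord_def ent_def by simp

lemma phi0_swap: "phi0 d p u v = phi0 d p v u"
  unfolding phi0_def Let_def by (simp add: add_ac)

lemma A0_swap: "A0 p u v = A0 p v u"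
  unfolding A0_def by (simp add: add_ac)

lemma interior_K0_swap: "interior_K0 p u v = interior_K0 p v u"
  unfolding interior_K0_def by auto

lemma A0_bounds:
  assumes int: "interior_K0 p u v" and "1 \<le> p"
  shows "0 < A0 p u v" "A0 p u v < real p"
proof -
  have pos: "0 < u i" "0 < v i" if "i \<in> {1..p}" for i
    using int that unfolding interior_K0_def by auto
  have "(\<Sum>i = 1..p. real i * (u i + v i)) \<le> (\<Sum>i = 1..p. real p * (u i + v i))"
    using pos by (intro sum_mono mult_right_mono) (auto simp: less_imp_le)
  also have "\<dots> = real p * ((\<Sum>i = 1..p. u i) + (\<Sum>i = 1..p. v i))"
    by (simp add: sum_distrib_left sum.distrib distrib_left)
  also have "\<dots> < real p * 1"
    using int assms(2) unfolding interior_K0_def by (intro mult_strict_left_mono) auto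
  finally show "0 < A0 p u v" unfolding A0_def by simp
  have "0 < (\<Sum>i = 1..p. real i * (u i + v i))"
    using pos assms(2) by (intro sum_pos) (auto intro!: mult_pos_pos add_pos_pos)
  then show "A0 p u v < real p" unfolding A0_def by simp
qed

lemma
  assumes "j \<in> {1..p}"
  shows A0_upd: "A0 p (u(j := t)) v = A0 p u v - real j * (t - u j)"
    and z0_upd: "z0 p (u(j := t)) = z0 p u - (t - u j)"
proof -
  have "(\<Sum>i = 1..p. real i * ((u(j := t)) i + v i))
      = (\<Sum>i = 1..p. real i * (u i + v i)) - real j * (u j + v j) + real j * (t + v j)"
    using assms by (subst sum_update_on_subset[where B = "{j}"]) auto
  then show "A0 p (u(j := t)) v = A0 p u v - real j * (t - u j)"
    unfolding A0_def by (simp add: algebra_simps)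
  have "(\<Sum>i = 1..p. (u(j := t)) i) = (\<Sum>i = 1..p. u i) - u j + t"
    using assms by (subst sum_update_on_subset[where B = "{j}"]) auto
  then show "z0 p (u(j := t)) = z0 p u - (t - u j)"
    unfolding z0_def by simp
qed

lemma phi0_along_u:
  assumes j: "j \<in> {1..p}"
  obtains R where "\<And>t. phi0 d p (u(j := t)) v =
      (A0 p u v - real j * (t - u j)) * ln (A0 p u v - real j * (t - u j))
    + (real d / 2 - (A0 p u v - real j * (t - u j))) * ln (real d / 2 - (A0 p u v - real j * (t - u j)))
    + ent (tau d p 0) (z0 p u - (t - u j)) + ent (tau d p j) t + R"
proof -
  let ?E = "\<lambda>w i. ent (tau d p i) (coord p w i) + ent (tau d p i) (coord p v i)"
  define R where "R = (\<Sum>i = 0..p. ?E u i) - (?E u 0 + ?E u j) + ent (tau d p 0) (z0 p v) + ent (tau d p j) (v j)"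
  have "(\<Sum>i = 0..p. ?E (u(j := t)) i)
      = (\<Sum>i = 0..p. ?E u i) - (\<Sum>i\<in>{0, j}. ?E u i) + (\<Sum>i\<in>{0, j}. ?E (u(j := t)) i)" for t
    using j by (intro sum_update_on_subset) (auto simp: coord_def)
  moreover have "coord p (u(j := t)) 0 = z0 p u - (t - u j)" "coord p (u(j := t)) j = t"
    "coord p v 0 = z0 p v" "coord p v j = v j" for t
    using j by (auto simp: coord_def z0_upd)
  ultimately have "phi0 d p (u(j := t)) v =
      (A0 p u v - real j * (t - u j)) * ln (A0 p u v - real j * (t - u j))
    + (real d / 2 - (A0 p u v - real j * (t - u j))) * ln (real d / 2 - (A0 p u v - real j * (t - u j)))
    + ent (tau d p 0) (z0 p u - (t - u j)) + ent (tau d p j) t + R" for t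
    using j unfolding phi0_eq A0_upd[OF j] R_def by simp
  then show thesis by (rule that)
qed

lemma has_real_derivative_phi0_u:
  assumes int: "interior_K0 p u v" and j: "j \<in> {1..p}" and "2 * p < d"
  shows "((\<lambda>t. phi0 d p (u(j := t)) v) has_real_derivative
     real j * (ln (real d / 2 - A0 p u v) - ln (A0 p u v))
       + ln (tau d p j) - ln (u j) - ln (tau d p 0) + ln (z0 p u)) (at (u j))"
proof -
  let ?a = "\<lambda>t. A0 p u v - real j * (t - u j)"
  obtain R where R: "\<And>t. phi0 d p (u(j := t)) v = ?a t * ln (?a t)
      + (real d / 2 - ?a t) * ln (real d / 2 - ?a t)
      + ent (tau d p 0) (z0 p u - (t - u j)) + ent (tau d p j) t + R"
    using phi0_along_u[OF j] by blast
  have "0 < A0 p u v" "A0 p u v < real p" using A0_bounds int j by auto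
  moreover have "0 < z0 p u" "0 < u j" using int j unfolding interior_K0_def z0_def by auto
  moreover have "0 < tau d p 0" "0 < tau d p j" using tau_pos assms j by auto
  ultimately show ?thesis
    unfolding R ent_def using assms(3)
    by (auto intro!: derivative_eq_intros) (simp add: right_diff_distrib)
qed

lemma has_real_derivative_phi0_v:
  assumes "interior_K0 p u v" and "j \<in> {1..p}" and "2 * p < d"
  shows "((\<lambda>t. phi0 d p u (v(j := t))) has_real_derivative
     real j * (ln (real d / 2 - A0 p u v) - ln (A0 p u v))
       + ln (tau d p j) - ln (v j) - ln (tau d p 0) + ln (z0 p v)) (at (v j))"
  using has_real_derivative_phi0_u[of p v u j d] assms
  by (simp add: phi0_swap[of d p u] A0_swap[of p u] interior_K0_swap)

lemma ln_balance_eq_0_iff: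
  fixes a b c c0 z w :: real
  assumes "0 < a" "0 < b" "0 < c" "0 < c0" "0 < z" "0 < w"
  shows "real j * (ln b - ln a) + ln c - ln w - ln c0 + ln z = 0 \<longleftrightarrow> w = c * (b / a) ^ j * z / c0"
proof -
  have "ln (c * (b / a) ^ j * z / c0) = real j * (ln b - ln a) + ln c + ln z - ln c0"
    using assms by (simp add: ln_mult ln_div ln_realpow)
  moreover have "0 < c * (b / a) ^ j * z / c0" using assms by simp
  ultimately show ?thesis using assms(6) by (smt (verit) ln_inj_iff)
qed

definition tau_geometric :: "nat \<Rightarrow> nat \<Rightarrow> real \<Rightarrow> (nat \<Rightarrow> real) \<Rightarrow> bool" where
  "tau_geometric d p x w \<longleftrightarrow> (\<forall>j\<in>{1..p}. w j = tau d p j * x ^ j * z0 p w / tau d p 0)"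

lemma critical0_iff:
  fixes u v :: "nat \<Rightarrow> real"
  assumes "2 * p < d" "1 \<le> p"
  defines "r \<equiv> (real d / 2 - A0 p u v) / A0 p u v"
  shows "critical0 d p u v \<longleftrightarrow> interior_K0 p u v \<and> tau_geometric d p r u \<and> tau_geometric d p r v"
proof (cases "interior_K0 p u v")
  case int: True
  have stationary_iff: "(f has_real_derivative 0) (at y) \<longleftrightarrow> f' = 0"
    if "(f has_real_derivative f') (at y)" for f :: "real \<Rightarrow> real" and f' y
    using that DERIV_unique by blast
  have pos: "0 < A0 p u v" "0 < real d / 2 - A0 p u v" "0 < z0 p u" "0 < z0 p v"
    "0 < tau d p 0" "\<And>j. j \<in> {1..p} \<Longrightarrow> 0 < tau d p j \<and> 0 < u j \<and> 0 < v j"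
    using int A0_bounds[OF int assms(2)] assms(1) tau_pos[OF assms(1)]
    by (auto simp: interior_K0_def z0_def)
  have "((\<lambda>t. phi0 d p (u(j := t)) v) has_real_derivative 0) (at (u j))
      \<longleftrightarrow> u j = tau d p j * r ^ j * z0 p u / tau d p 0"
       "((\<lambda>t. phi0 d p u (v(j := t))) has_real_derivative 0) (at (v j))
      \<longleftrightarrow> v j = tau d p j * r ^ j * z0 p v / tau d p 0"
    if j: "j \<in> {1..p}" for j
    unfolding stationary_iff[OF has_real_derivative_phi0_u[OF int j assms(1)]]
      stationary_iff[OF has_real_derivative_phi0_v[OF int j assms(1)]] r_def
    using pos pos(6)[OF j] by (simp_all add: ln_balance_eq_0_iff)
  then show ?thesis using int unfolding critical0_def tau_geometric_def by auto
qed (simp add: critical0_def)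

lemma z0_ztilde:
  assumes "2 * p < d" "0 < x"
  shows "z0 p (ztilde d p x) = tau d p 0 / (2 * theta d p x)"
  using theta_pos[OF assms]
  by (simp add: z0_def ztilde_def sum_divide_distrib[symmetric] theta_eq field_simps)

lemma A0_ztilde:
  assumes "2 * p < d" "0 < x"
  shows "A0 p (ztilde d p x) (ztilde d p x) = real p - theta1 d p x / theta d p x"
  using theta_pos[OF assms]
  by (simp add: A0_def ztilde_def theta1_def sum_divide_distrib[symmetric] field_simps)

lemma interior_K0_ztilde:
  assumes "2 * p < d" "0 < x"
  shows "interior_K0 p (ztilde d p x) (ztilde d p x)"
proof -
  have "0 < z0 p (ztilde d p x)"
    using z0_ztilde[OF assms] tau_pos[OF assms(1)] theta_pos[OF assms] by simp
  moreover have "0 < ztilde d p x j" if "j \<in> {1..p}" for j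
    using tau_pos[OF assms(1), of j] theta_pos[OF assms] assms(2) that by (simp add: ztilde_def)
  ultimately show ?thesis unfolding interior_K0_def z0_def by auto
qed

lemma z0_tau_geometric:
  assumes "2 * p < d" "0 < x" "tau_geometric d p x w"
  shows "z0 p w = tau d p 0 / (2 * theta d p x)"
proof -
  have "(\<Sum>j = 1..p. w j) = (\<Sum>j = 1..p. tau d p j * x ^ j) * z0 p w / tau d p 0"
    using assms(3) unfolding tau_geometric_def by (simp add: sum_divide_distrib sum_distrib_right)
  then have "z0 p w = 1/2 - (theta d p x - tau d p 0) * z0 p w / tau d p 0"
    unfolding theta_eq by (simp add: z0_def[of p w])
  then have "z0 p w * theta d p x = tau d p 0 / 2"
    using tau_pos[OF assms(1), of 0] by (simp add: field_simps)
  then show ?thesis using theta_pos[OF assms(1,2)] by (simp add: field_simps)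
qed

lemma tau_geometric_iff_ztilde:
  assumes "2 * p < d" "0 < x"
  shows "tau_geometric d p x w \<longleftrightarrow> (\<forall>j\<in>{1..p}. w j = ztilde d p x j)"
proof -
  have "tau_geometric d p x w \<longleftrightarrow> (\<forall>j\<in>{1..p}. w j = ztilde d p x j)"
    if "z0 p w = tau d p 0 / (2 * theta d p x)"
    using that tau_pos[OF assms(1), of 0] unfolding tau_geometric_def ztilde_def by simp
  moreover have "z0 p w = z0 p (ztilde d p x)" if "\<forall>j\<in>{1..p}. w j = ztilde d p x j"
    using that unfolding z0_def by simp
  ultimately show ?thesis using z0_tau_geometric[OF assms] z0_ztilde[OF assms] by metis
qed

lemma tau_geometric_ztilde_iff:
  assumes "2 * p < d" "1 \<le> p" "0 < x" "0 \<le> y"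
  shows "tau_geometric d p y (ztilde d p x) \<longleftrightarrow> y = x"
proof -
  have "ztilde d p x j = tau d p j * y ^ j * z0 p (ztilde d p x) / tau d p 0 \<longleftrightarrow> y ^ j = x ^ j"
    if "j \<le> p" for j
    using tau_pos[OF assms(1), of 0] tau_pos[OF assms(1), of j] theta_pos[OF assms(1,3)] that
    by (auto simp: z0_ztilde[OF assms(1,3)] ztilde_def)
  then have "tau_geometric d p y (ztilde d p x) \<longleftrightarrow> (\<forall>j\<in>{1..p}. y ^ j = x ^ j)"
    unfolding tau_geometric_def by auto
  also have "\<dots> \<longleftrightarrow> y = x"
  proof
    assume "\<forall>j\<in>{1..p}. y ^ j = x ^ j"
    then show "y = x" using assms(2) by (metis atLeastAtMost_iff order_refl power_one_right)
  qed simp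
  finally show ?thesis .
qed

lemma gpoly_eq_0_iff:
  assumes "0 < theta d p x" "theta1 d p x \<noteq> real p * theta d p x"
  defines "A \<equiv> real p - theta1 d p x / theta d p x"
  shows "(real d / 2 - A) / A = x \<longleftrightarrow> gpoly d p x = 0"
proof -
  have thetaA: "theta d p x * A = real p * theta d p x - theta1 d p x"
    using assms(1) unfolding A_def by (simp add: field_simps)
  then have "A \<noteq> 0" using assms(2) by auto
  then have "(real d / 2 - A) / A = x \<longleftrightarrow> real d - 2 * A = 2 * x * A"
    by (auto simp: field_simps)
  also have "\<dots> \<longleftrightarrow> theta d p x * (real d - 2 * A) = theta d p x * (2 * x * A)"
    using assms(1) by simp
  also have "\<dots> \<longleftrightarrow> gpoly d p x = 0"
    unfolding gpoly_def thetaA[symmetric] by (auto simp: algebra_simps)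
  finally show ?thesis .
qed

theorem lemmaA5:
  fixes d p :: nat
  assumes "d \<ge> 4" and "1 \<le> p" and "2 * p < d"
  shows "(\<forall>u v. critical0 d p u v \<longrightarrow>
            (\<exists>x>0. \<forall>j\<in>{1..p}. u j = ztilde d p x j \<and> v j = ztilde d p x j))
       \<and> (\<forall>x>0. critical0 d p (ztilde d p x) (ztilde d p x) \<longleftrightarrow> gpoly d p x = 0)"
proof (intro conjI allI impI)
  fix u v assume crit: "critical0 d p u v"
  define r where "r = (real d / 2 - A0 p u v) / A0 p u v"
  have "interior_K0 p u v" "tau_geometric d p r u" "tau_geometric d p r v"
    using crit critical0_iff[OF assms(3,2)] unfolding r_def by auto
  moreover from this have "0 < r"
    using A0_bounds[of p u v] assms(2,3) unfolding r_def by (simp add: field_simps)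
  ultimately show "\<exists>x>0. \<forall>j\<in>{1..p}. u j = ztilde d p x j \<and> v j = ztilde d p x j"
    using tau_geometric_iff_ztilde[OF assms(3)] by blast
next
  fix x :: real assume "0 < x"
  let ?z = "ztilde d p x" and ?A = "real p - theta1 d p x / theta d p x"
  have int: "interior_K0 p ?z ?z" using interior_K0_ztilde[OF assms(3) \<open>0 < x\<close>] .
  have A: "A0 p ?z ?z = ?A" using A0_ztilde[OF assms(3) \<open>0 < x\<close>] .
  have "0 < ?A" "?A < real p" using A0_bounds[OF int assms(2)] unfolding A by auto
  have "critical0 d p ?z ?z \<longleftrightarrow> tau_geometric d p ((real d / 2 - ?A) / ?A) ?z"
    using critical0_iff[OF assms(3,2)] int by (simp add: A)
  also have "\<dots> \<longleftrightarrow> (real d / 2 - ?A) / ?A = x"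
    using \<open>0 < ?A\<close> \<open>?A < real p\<close> assms(3)
    by (intro tau_geometric_ztilde_iff[OF assms(3,2) \<open>0 < x\<close>]) (simp add: field_simps)
  also have "\<dots> \<longleftrightarrow> gpoly d p x = 0"
    using gpoly_eq_0_iff theta_pos[OF assms(3) \<open>0 < x\<close>] \<open>0 < ?A\<close> by (simp add: field_simps)
  finally show "critical0 d p ?z ?z \<longleftrightarrow> gpoly d p x = 0" .
qed

end
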